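(* Let $t\geq1$, $1\leq K_1\leq K_2$ be integers and $0<\mu<1/(2K_1)$. There is $n_0$ such that for all $n\geq n_0$ the following holds. Suppose $G=(U\cup V,E)$ is a bipartite graph with $|V|=K_1$ and $|U|=K_2$, and $\mathbf{H}$ is a simple $n$-blowup of the $3$-graph $H=\widehat{G}_{UV}$. If $\mathcal{P}$ is a $\mu$-regular partition of $\mathbf{H}$ with at most $t$ parts, then $\mathcal{P}$ is $4\mu$-homogeneous with respect to $\mathbf{H}$.
   Context: For a bipartite graph $G=(U\cup V,E)$, $\widehat G_{UV}$ is the $3$-graph with vertex set $\{a_u:u\in U\}\cup\{b_v:v\in V\}\cup\{c_v:v\in V\}$ and edges $a_ub_vc_v$ for $uv\in E$. For a $3$-graph $G'=(W,F)$, a simple $n$-blowup is the $3$-graph on $\bigcup_{w\in W}V_w$ (disjoint, $|V_w|=n$) with edge set $\bigcup_{w_1w_2w_3\in F}\{\{x_1,x_2,x_3\}:x_i\in V_{w_i}\}$. For a $3$-graph $\mathbf H$ and nonempty $X,Y,Z\subseteq V(\mathbf H)$, $d_{\mathbf H}(X,Y,Z)=|\{(x,y,z)\in X\times Y\times Z:\{x,y,z\}\in E(\mathbf H)\}|/(|X||Y||Z|)$. $(X,Y,Z)$ is $\mu$-regular if $|d(X,Y,Z)-d(X',Y',Z')|\le\mu$ for all $X'\subseteq X,Y'\subseteq Y,Z'\subseteq Z$ of sizes at least $\mu|X|,\mu|Y|,\mu|Z|$; it is $\eta$-homogeneous if $d(X,Y,Z)\in[0,\eta)\cup(1-\eta,1]$.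 A partition $\mathcal P$ of $V(\mathbf H)$ is $\mu$-regular (resp. $\eta$-homogeneous) if at least $(1-\mu)|V(\mathbf H)|^3$ (resp. $(1-\eta)|V(\mathbf H)|^3$) triples of $V(\mathbf H)^3$ lie in $X\times Y\times Z$ for some $\mu$-regular (resp. $\eta$-homogeneous) $(X,Y,Z)\in\mathcal P^3$. *)

theory Defs
  imports Complex_Main "HOL-Library.Disjoint_Sets"
begin

text \<open>3-graphs are given by their edge sets: a set of 3-element vertex sets.\<close>

definition density3 :: "'a set set \<Rightarrow> 'a set \<Rightarrow> 'a set \<Rightarrow> 'a set \<Rightarrow> real" where
  "density3 F X Y Z =
     real (card {(x,y,z). x \<in> X \<and> y \<in> Y \<and> z \<in> Z \<and> {x,y,z} \<in> F})
     / (real (card X) * real (card Y) * real (card Z))"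

definition regular_triple :: "'a set set \<Rightarrow> real \<Rightarrow> 'a set \<Rightarrow> 'a set \<Rightarrow> 'a set \<Rightarrow> bool" where
  "regular_triple F \<mu> X Y Z \<longleftrightarrow>
     (\<forall>X' Y' Z'. X' \<subseteq> X \<and> Y' \<subseteq> Y \<and> Z' \<subseteq> Z \<and>
        real (card X') \<ge> \<mu> * real (card X) \<and> real (card Y') \<ge> \<mu> * real (card Y) \<and>
        real (card Z') \<ge> \<mu> * real (card Z) \<longrightarrow>
        \<bar>density3 F X Y Z - density3 F X' Y' Z'\<bar> \<le> \<mu>)"

definition homogeneous_triple :: "'a set set \<Rightarrow> real \<Rightarrow> 'a set \<Rightarrow> 'a set \<Rightarrow> 'a set \<Rightarrow> bool" where
  "homogeneous_triple F \<eta> X Y Z \<longleftrightarrow>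
     (let d = density3 F X Y Z in (0 \<le> d \<and> d < \<eta>) \<or> (1 - \<eta> < d \<and> d \<le> 1))"

definition regular_partition :: "'a set set \<Rightarrow> 'a set \<Rightarrow> 'a set set \<Rightarrow> real \<Rightarrow> bool" where
  "regular_partition F W P \<mu> \<longleftrightarrow>
     real (card (\<Union>{X \<times> Y \<times> Z | X Y Z. X \<in> P \<and> Y \<in> P \<and> Z \<in> P \<and> regular_triple F \<mu> X Y Z}))
       \<ge> (1 - \<mu>) * real (card W) ^ 3"

definition homogeneous_partition :: "'a set set \<Rightarrow> 'a set \<Rightarrow> 'a set set \<Rightarrow> real \<Rightarrow> bool" where
  "homogeneous_partition F W P \<eta> \<longleftrightarrow>
     real (card (\<Union>{X \<times> Y \<times> Z | X Y Z. X \<in> P \<and> Y \<in> P \<and> Z \<in> P \<and> homogeneous_triple F \<eta> X Y Z}))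
       \<ge> (1 - \<eta>) * real (card W) ^ 3"

text \<open>Vertices of the 3-graph hat G_UV: a_u, b_v, c_v.\<close>
datatype 'v hatv = VA 'v | VB 'v | VC 'v

definition hat_vertices :: "'v set \<Rightarrow> 'v set \<Rightarrow> 'v hatv set" where
  "hat_vertices U V = VA ` U \<union> VB ` V \<union> VC ` V"

definition hat_edges :: "('v \<times> 'v) set \<Rightarrow> 'v hatv set set" where
  "hat_edges E = {{VA u, VB v, VC v} | u v. (u, v) \<in> E}"

definition blowup_vertices :: "'w set \<Rightarrow> nat \<Rightarrow> ('w \<times> nat) set" where
  "blowup_vertices W n = W \<times> {..<n}"

definition blowup_edges :: "'w set set \<Rightarrow> nat \<Rightarrow> ('w \<times> nat) set set" where
  "blowup_edges F n =
     {{(w1, i1), (w2, i2), (w3, i3)} | w1 w2 w3 i1 i2 i3.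
        {w1, w2, w3} \<in> F \<and> i1 < n \<and> i2 < n \<and> i3 < n}"

end

theory Submission
  imports Defs
begin

(* If a mu-regular triple (X, Y, Z) has density at least 4 mu, then every mu-large subtriple
   spans an edge. Every edge of the blowup of hat G_UV has one vertex in each of the layers
   a, b, c, so X, Y, Z are dominated by three different layers, say by b, c and a. As
   |V| mu < 1/2, pigeonhole yields large fibres b_v in X and c_v' in Y, and an edge between them
   forces v = v'. The a-vertices of Z whose index is a G-neighbour of v form a large set too
   (otherwise the non-neighbours would be large and span an edge a_u b_v c_v with uv not in E),
   and these three large sets span only edges. Regularity then gives density at least 1 - mu,
   so every regular triple is 4 mu-homogeneous, for every n. *)

definition large_subset :: "real \<Rightarrow> 'a set \<Rightarrow> 'a set \<Rightarrow> bool" where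
  "large_subset \<mu> A X \<longleftrightarrow> A \<subseteq> X \<and> \<mu> * real (card X) \<le> real (card A)"

lemma large_subset_refl: "\<mu> \<le> 1 \<Longrightarrow> large_subset \<mu> X X"
  unfolding large_subset_def using mult_right_mono[of \<mu> 1 "real (card X)"] by simp

lemma large_subset_nonempty:
  assumes "large_subset \<mu> A X" "0 < \<mu>" "finite X" "X \<noteq> {}"
  shows "A \<noteq> {}"
proof -
  have "0 < \<mu> * real (card X)" using assms(2-4) by (simp add: card_gt_0_iff)
  then show ?thesis using assms(1) unfolding large_subset_def by auto
qed

definition large_subtriples_meet :: "'a set set \<Rightarrow> real \<Rightarrow> 'a set \<Rightarrow> 'a set \<Rightarrow> 'a set \<Rightarrow> bool" where
  "large_subtriples_meet F \<mu> X Y Z \<longleftrightarrow>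
     (\<forall>X' Y' Z'. large_subset \<mu> X' X \<longrightarrow> large_subset \<mu> Y' Y \<longrightarrow> large_subset \<mu> Z' Z \<longrightarrow>
        (\<exists>x\<in>X'. \<exists>y\<in>Y'. \<exists>z\<in>Z'. {x, y, z} \<in> F))"

definition has_complete_large_subtriple :: "'a set set \<Rightarrow> real \<Rightarrow> 'a set \<Rightarrow> 'a set \<Rightarrow> 'a set \<Rightarrow> bool" where
  "has_complete_large_subtriple F \<mu> X Y Z \<longleftrightarrow>
     (\<exists>X' Y' Z'. large_subset \<mu> X' X \<and> large_subset \<mu> Y' Y \<and> large_subset \<mu> Z' Z \<and>
        (\<forall>x\<in>X'. \<forall>y\<in>Y'. \<forall>z\<in>Z'. {x, y, z} \<in> F))"

lemma large_subtriples_meet_swap12: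
  assumes "large_subtriples_meet F \<mu> X Y Z"
  shows "large_subtriples_meet F \<mu> Y X Z"
  unfolding large_subtriples_meet_def
proof (intro allI impI)
  fix Y' X' Z' assume "large_subset \<mu> Y' Y" "large_subset \<mu> X' X" "large_subset \<mu> Z' Z"
  then obtain x y z where "x \<in> X'" "y \<in> Y'" "z \<in> Z'" "{x, y, z} \<in> F"
    using assms unfolding large_subtriples_meet_def by blast
  moreover from \<open>{x, y, z} \<in> F\<close> have "{y, x, z} \<in> F" by (simp add: insert_commute)
  ultimately show "\<exists>y\<in>Y'. \<exists>x\<in>X'. \<exists>z\<in>Z'. {y, x, z} \<in> F" by blast
qed

lemma large_subtriples_meet_swap23:
  assumes "large_subtriples_meet F \<mu> X Y Z"
  shows "large_subtriples_meet F \<mu> X Z Y"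
  unfolding large_subtriples_meet_def
proof (intro allI impI)
  fix X' Z' Y' assume "large_subset \<mu> X' X" "large_subset \<mu> Z' Z" "large_subset \<mu> Y' Y"
  then obtain x y z where "x \<in> X'" "y \<in> Y'" "z \<in> Z'" "{x, y, z} \<in> F"
    using assms unfolding large_subtriples_meet_def by blast
  moreover from \<open>{x, y, z} \<in> F\<close> have "{x, z, y} \<in> F" by (simp add: insert_commute)
  ultimately show "\<exists>x\<in>X'. \<exists>z\<in>Z'. \<exists>y\<in>Y'. {x, z, y} \<in> F" by blast
qed

lemma has_complete_large_subtriple_swap12:
  assumes "has_complete_large_subtriple F \<mu> X Y Z"
  shows "has_complete_large_subtriple F \<mu> Y X Z"
proof -
  obtain X' Y' Z' where "large_subset \<mu> X' X" "large_subset \<mu> Y' Y" "large_subset \<mu> Z' Z"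
    and "\<forall>x\<in>X'. \<forall>y\<in>Y'. \<forall>z\<in>Z'. {x, y, z} \<in> F"
    using assms unfolding has_complete_large_subtriple_def by blast
  moreover have "{y, x, z} = {x, y, z}" for x y z :: 'a by (rule insert_commute)
  ultimately show ?thesis unfolding has_complete_large_subtriple_def by metis
qed

lemma has_complete_large_subtriple_swap23:
  assumes "has_complete_large_subtriple F \<mu> X Y Z"
  shows "has_complete_large_subtriple F \<mu> X Z Y"
proof -
  obtain X' Y' Z' where "large_subset \<mu> X' X" "large_subset \<mu> Y' Y" "large_subset \<mu> Z' Z"
    and "\<forall>x\<in>X'. \<forall>y\<in>Y'. \<forall>z\<in>Z'. {x, y, z} \<in> F"
    using assms unfolding has_complete_large_subtriple_def by blast
  moreover have "{x, z, y} = {x, y, z}" for x y z :: 'a by (simp add: insert_commute)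
  ultimately show ?thesis unfolding has_complete_large_subtriple_def by metis
qed

lemma density3_nonneg: "0 \<le> density3 F X Y Z"
  unfolding density3_def by simp

lemma density3_le_1:
  assumes "finite X" "finite Y" "finite Z"
  shows "density3 F X Y Z \<le> 1"
proof -
  let ?S = "{(x, y, z). x \<in> X \<and> y \<in> Y \<and> z \<in> Z \<and> {x, y, z} \<in> F}"
  let ?N = "real (card X) * real (card Y) * real (card Z)"
  have "real (card ?S) \<le> real (card (X \<times> Y \<times> Z))"
    using assms by (intro of_nat_mono card_mono) auto
  also have "\<dots> = ?N" by (simp add: card_cartesian_product)
  finally have "real (card ?S) \<le> ?N" .
  then show ?thesis
    unfolding density3_def by (cases "?N = 0") (simp_all add: divide_le_eq_1_pos)
qed

lemma density3_eq_0:
  assumes "\<And>x y z. x \<in> X \<Longrightarrow> y \<in> Y \<Longrightarrow> z \<in> Z \<Longrightarrow> {x, y, z} \<notin> F"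
  shows "density3 F X Y Z = 0"
proof -
  have "{(x, y, z). x \<in> X \<and> y \<in> Y \<and> z \<in> Z \<and> {x, y, z} \<in> F} = {}" using assms by auto
  then show ?thesis unfolding density3_def by (simp only:) simp
qed

lemma density3_eq_1:
  assumes "\<And>x y z. x \<in> X \<Longrightarrow> y \<in> Y \<Longrightarrow> z \<in> Z \<Longrightarrow> {x, y, z} \<in> F"
    and "finite X" "finite Y" "finite Z" "X \<noteq> {}" "Y \<noteq> {}" "Z \<noteq> {}"
  shows "density3 F X Y Z = 1"
proof -
  have "{(x, y, z). x \<in> X \<and> y \<in> Y \<and> z \<in> Z \<and> {x, y, z} \<in> F} = X \<times> Y \<times> Z" using assms(1) by auto
  then show ?thesis unfolding density3_def using assms(2-7) by (simp add: card_cartesian_product)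
qed

lemma regular_tripleD:
  "regular_triple F \<mu> X Y Z \<Longrightarrow> large_subset \<mu> X' X \<Longrightarrow> large_subset \<mu> Y' Y \<Longrightarrow> large_subset \<mu> Z' Z
    \<Longrightarrow> \<bar>density3 F X Y Z - density3 F X' Y' Z'\<bar> \<le> \<mu>"
  unfolding regular_triple_def large_subset_def by blast

lemma regular_triple_large_subtriples_meet:
  assumes "regular_triple F \<mu> X Y Z" "\<mu> < density3 F X Y Z"
  shows "large_subtriples_meet F \<mu> X Y Z"
  unfolding large_subtriples_meet_def
proof (intro allI impI)
  fix X' Y' Z' assume large: "large_subset \<mu> X' X" "large_subset \<mu> Y' Y" "large_subset \<mu> Z' Z"
  show "\<exists>x\<in>X'. \<exists>y\<in>Y'. \<exists>z\<in>Z'. {x, y, z} \<in> F"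
  proof (rule ccontr)
    assume "\<not> ?thesis"
    then have "density3 F X' Y' Z' = 0" by (intro density3_eq_0) auto
    then show False using regular_tripleD[OF assms(1) large] assms(2) by simp
  qed
qed

lemma regular_triple_density_ge:
  assumes "regular_triple F \<mu> X Y Z" "has_complete_large_subtriple F \<mu> X Y Z" "0 < \<mu>"
    and "finite X" "finite Y" "finite Z" "X \<noteq> {}" "Y \<noteq> {}" "Z \<noteq> {}"
  shows "1 - \<mu> \<le> density3 F X Y Z"
proof -
  obtain X' Y' Z' where large: "large_subset \<mu> X' X" "large_subset \<mu> Y' Y" "large_subset \<mu> Z' Z"
    and complete: "\<forall>x\<in>X'. \<forall>y\<in>Y'. \<forall>z\<in>Z'. {x, y, z} \<in> F"
    using assms(2) unfolding has_complete_large_subtriple_def by blast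
  have "density3 F X' Y' Z' = 1"
  proof (rule density3_eq_1)
    show "finite X'" "finite Y'" "finite Z'"
      using large assms(4-6) unfolding large_subset_def by (auto intro: finite_subset)
    show "X' \<noteq> {}" "Y' \<noteq> {}" "Z' \<noteq> {}"
      using large_subset_nonempty large assms by blast+
  qed (use complete in blast)
  then show ?thesis using regular_tripleD[OF assms(1) large] by simp
qed

lemma homogeneous_partition_if_regular_triples_homogeneous:
  assumes "regular_partition F W P \<mu>" "finite W" "\<forall>X\<in>P. X \<subseteq> W" "\<mu> \<le> \<eta>"
    and "\<And>X Y Z. X \<in> P \<Longrightarrow> Y \<in> P \<Longrightarrow> Z \<in> P \<Longrightarrow> regular_triple F \<mu> X Y Z \<Longrightarrow>
      homogeneous_triple F \<eta> X Y Z"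
  shows "homogeneous_partition F W P \<eta>"
proof -
  let ?reg = "\<Union>{X \<times> Y \<times> Z | X Y Z. X \<in> P \<and> Y \<in> P \<and> Z \<in> P \<and> regular_triple F \<mu> X Y Z}"
  let ?hom = "\<Union>{X \<times> Y \<times> Z | X Y Z. X \<in> P \<and> Y \<in> P \<and> Z \<in> P \<and> homogeneous_triple F \<eta> X Y Z}"
  have "?hom \<subseteq> W \<times> W \<times> W"
  proof
    fix t assume "t \<in> ?hom"
    then obtain X Y Z where "X \<in> P" "Y \<in> P" "Z \<in> P" "t \<in> X \<times> Y \<times> Z" by blast
    then show "t \<in> W \<times> W \<times> W" using assms(3) by blast
  qed
  then have "finite ?hom" by (rule finite_subset) (use assms(2) in simp)
  have "(1 - \<eta>) * real (card W) ^ 3 \<le> (1 - \<mu>) * real (card W) ^ 3"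
    using assms(4) by (intro mult_right_mono) auto
  also have "\<dots> \<le> real (card ?reg)"
    using assms(1) by (simp only: regular_partition_def)
  also have "\<dots> \<le> real (card ?hom)"
  proof (intro of_nat_mono card_mono \<open>finite ?hom\<close> subsetI)
    fix t assume "t \<in> ?reg"
    then obtain X Y Z where "X \<in> P" "Y \<in> P" "Z \<in> P" "regular_triple F \<mu> X Y Z" "t \<in> X \<times> Y \<times> Z"
      by blast
    then show "t \<in> ?hom" using assms(5) by blast
  qed
  finally show ?thesis unfolding homogeneous_partition_def .
qed

lemma exists_large_piece_of_cover:
  assumes "finite I" "A \<subseteq> (\<Union>i\<in>I. B i)" "\<And>i. i \<in> I \<Longrightarrow> finite (B i)"
    and "real (card I) * c < real (card A)"
  shows "\<exists>i\<in>I. c \<le> real (card (B i))"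
proof (rule ccontr)
  assume "\<not> ?thesis"
  then have small: "\<And>i. i \<in> I \<Longrightarrow> real (card (B i)) \<le> c" by fastforce
  have "card A \<le> card (\<Union>i\<in>I. B i)"
    using assms(1-3) by (intro card_mono) auto
  also have "\<dots> \<le> (\<Sum>i\<in>I. card (B i))" using assms(1) by (rule card_UN_le)
  finally have "real (card A) \<le> (\<Sum>i\<in>I. real (card (B i)))" by (metis of_nat_le_iff of_nat_sum)
  also have "\<dots> \<le> real (card I) * c" using sum_mono[of I _ "\<lambda>_. c", OF small] by simp
  finally show False using assms(4) by simp
qed

lemma blowup_vertex_iff: "w \<in> blowup_vertices W n \<longleftrightarrow> fst w \<in> W \<and> snd w < n"
  unfolding blowup_vertices_def by (cases w) auto

lemma blowup_edge_iff:
  "{p, q, r} \<in> blowup_edges F n \<longleftrightarrow> {fst p, fst q, fst r} \<in> F \<and> snd p < n \<and> snd q < n \<and> snd r < n"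
proof
  assume "{p, q, r} \<in> blowup_edges F n"
  then obtain w1 w2 w3 i1 i2 i3 where "{p, q, r} = {(w1, i1), (w2, i2), (w3, i3)}"
    and "{w1, w2, w3} \<in> F" "i1 < n" "i2 < n" "i3 < n"
    unfolding blowup_edges_def by blast
  moreover have "{fst p, fst q, fst r} = fst ` {p, q, r}" "{snd p, snd q, snd r} \<subseteq> snd ` {p, q, r}" by auto
  ultimately show "{fst p, fst q, fst r} \<in> F \<and> snd p < n \<and> snd q < n \<and> snd r < n" by auto
next
  assume "{fst p, fst q, fst r} \<in> F \<and> snd p < n \<and> snd q < n \<and> snd r < n"
  moreover have "{p, q, r} = {(fst p, snd p), (fst q, snd q), (fst r, snd r)}" by simp
  ultimately show "{p, q, r} \<in> blowup_edges F n"
    unfolding blowup_edges_def by blast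
qed

fun layer :: "'v hatv \<Rightarrow> nat" where
  "layer (VA _) = 0" | "layer (VB _) = 1" | "layer (VC _) = 2"

lemma hat_edge_layers_distinct:
  assumes "{a, b, c} \<in> hat_edges E"
  shows "layer a \<noteq> layer b \<and> layer a \<noteq> layer c \<and> layer b \<noteq> layer c"
proof -
  obtain u v where "{a, b, c} = {VA u, VB v, VC v}"
    using assms unfolding hat_edges_def by blast
  then have "a \<in> {VA u, VB v, VC v}" "b \<in> {VA u, VB v, VC v}" "c \<in> {VA u, VB v, VC v}"
    "VA u \<in> {a, b, c}" "VB v \<in> {a, b, c}" "VC v \<in> {a, b, c}" by blast+
  then show ?thesis by auto
qed

lemma hat_edge_VB_VC:
  assumes "{VB v, VC v', c} \<in> hat_edges E"
  shows "v' = v"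
proof -
  obtain u w where "{VB v, VC v', c} = {VA u, VB w, VC w}"
    using assms unfolding hat_edges_def by blast
  then have "VB v \<in> {VA u, VB w, VC w}" "VC v' \<in> {VA u, VB w, VC w}" by blast+
  then show ?thesis by simp
qed

lemma hat_edge_VB_VC_VA_iff: "{VB v, VC v, VA u} \<in> hat_edges E \<longleftrightarrow> (u, v) \<in> E"
proof
  assume "{VB v, VC v, VA u} \<in> hat_edges E"
  then obtain u' w where e: "{VB v, VC v, VA u} = {VA u', VB w, VC w}" "(u', w) \<in> E"
    unfolding hat_edges_def by blast
  then have "VB v \<in> {VA u', VB w, VC w}" "VA u \<in> {VA u', VB w, VC w}" by blast+
  then show "(u, v) \<in> E" using e(2) by simp
next
  assume "(u, v) \<in> E"
  moreover have "{VB v, VC v, VA u} = {VA u, VB v, VC v}" by (simp add: insert_commute)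
  ultimately show "{VB v, VC v, VA u} \<in> hat_edges E" unfolding hat_edges_def by blast
qed

definition layer_part :: "('v hatv \<times> 'i) set \<Rightarrow> nat \<Rightarrow> ('v hatv \<times> 'i) set" where
  "layer_part X k = {w \<in> X. layer (fst w) = k}"

lemma large_layer_part_iff:
  "large_subset \<mu> (layer_part X k) X \<longleftrightarrow> \<mu> * real (card X) \<le> real (card (layer_part X k))"
  unfolding large_subset_def layer_part_def by auto

lemma layer_less_3: "layer a < 3"
  by (cases a) auto

lemma card_layer_parts:
  assumes "finite X"
  shows "card X = card (layer_part X 0) + card (layer_part X 1) + card (layer_part X 2)"
proof -
  have "X = (\<Union>k<3. layer_part X k)"
    unfolding layer_part_def using layer_less_3 by blast
  moreover have "card (\<Union>k<3. layer_part X k) = (\<Sum>k<3. card (layer_part X k))"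
    using assms by (intro card_UN_disjoint) (auto simp: layer_part_def)
  ultimately show ?thesis by (simp add: eval_nat_numeral)
qed

lemma exists_large_layer_part:
  assumes "finite X" "3 * \<mu> \<le> 1"
  shows "\<exists>k<3. large_subset \<mu> (layer_part X k) X"
proof (rule ccontr)
  assume "\<not> ?thesis"
  then have "real (card (layer_part X k)) < \<mu> * real (card X)" if "k < 3" for k
    using that by (auto simp: large_layer_part_iff)
  from this[of 0] this[of 1] this[of 2] have "real (card X) < 3 * \<mu> * real (card X)"
    using card_layer_parts[OF assms(1)] by simp
  moreover have "3 * \<mu> * real (card X) \<le> real (card X)"
    using mult_right_mono[OF assms(2), of "real (card X)"] by simp
  ultimately show False by simp
qed

lemma large_layer_parts_distinct:
  assumes "large_subtriples_meet (blowup_edges (hat_edges E) n) \<mu> X Y Z"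
    and "large_subset \<mu> (layer_part X i) X" "large_subset \<mu> (layer_part Y j) Y"
      "large_subset \<mu> (layer_part Z k) Z"
  shows "i \<noteq> j \<and> i \<noteq> k \<and> j \<noteq> k"
proof -
  obtain x y z where "x \<in> layer_part X i" "y \<in> layer_part Y j" "z \<in> layer_part Z k"
    and "{x, y, z} \<in> blowup_edges (hat_edges E) n"
    using assms unfolding large_subtriples_meet_def by blast
  then have "layer (fst x) = i" "layer (fst y) = j" "layer (fst z) = k"
    and "{fst x, fst y, fst z} \<in> hat_edges E"
    by (auto simp: layer_part_def blowup_edge_iff)
  then show ?thesis by (metis hat_edge_layers_distinct)
qed

lemma dominant_layer_parts:
  assumes meet: "large_subtriples_meet (blowup_edges (hat_edges E) n) \<mu> P Q R"
    and P1: "large_subset \<mu> (layer_part P 1) P" and Q2: "large_subset \<mu> (layer_part Q 2) Q"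
    and R0: "large_subset \<mu> (layer_part R 0) R"
    and "finite P" "finite Q" "finite R"
  shows "(1 - 2 * \<mu>) * real (card P) < real (card (layer_part P 1))"
    and "(1 - 2 * \<mu>) * real (card Q) < real (card (layer_part Q 2))"
    and "(1 - 2 * \<mu>) * real (card R) < real (card (layer_part R 0))"
proof -
  note distinct = large_layer_parts_distinct[OF meet]
  have "\<not> large_subset \<mu> (layer_part P 0) P" "\<not> large_subset \<mu> (layer_part P 2) P"
    using distinct[OF _ Q2 R0] by blast+
  moreover have "\<not> large_subset \<mu> (layer_part Q 0) Q" "\<not> large_subset \<mu> (layer_part Q 1) Q"
    using distinct[OF P1 _ R0] by blast+
  moreover have "\<not> large_subset \<mu> (layer_part R 1) R" "\<not> large_subset \<mu> (layer_part R 2) R"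
    using distinct[OF P1 Q2] by blast+
  moreover have "real (card S) = real (card (layer_part S 0)) + real (card (layer_part S 1))
      + real (card (layer_part S 2))" if "finite S" for S :: "('a hatv \<times> 'b) set"
    using card_layer_parts[OF that] by simp
  ultimately show "(1 - 2 * \<mu>) * real (card P) < real (card (layer_part P 1))"
    and "(1 - 2 * \<mu>) * real (card Q) < real (card (layer_part Q 2))"
    and "(1 - 2 * \<mu>) * real (card R) < real (card (layer_part R 0))"
    using assms(5-7) unfolding large_layer_part_iff by (fastforce simp: algebra_simps)+
qed

lemma layer_parts_covered_by_fibres:
  assumes "X \<subseteq> blowup_vertices (hat_vertices U V) n"
  shows "layer_part X 1 \<subseteq> (\<Union>v\<in>V. {w \<in> X. fst w = VB v})"
    and "layer_part X 2 \<subseteq> (\<Union>v\<in>V. {w \<in> X. fst w = VC v})"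
proof -
  have "fst w \<in> VA ` U \<union> VB ` V \<union> VC ` V" if "w \<in> X" for w
    using assms that by (auto simp: blowup_vertex_iff hat_vertices_def)
  then show "layer_part X 1 \<subseteq> (\<Union>v\<in>V. {w \<in> X. fst w = VB v})"
    and "layer_part X 2 \<subseteq> (\<Union>v\<in>V. {w \<in> X. fst w = VC v})"
    unfolding layer_part_def by fastforce+
qed

lemma common_large_fibre:
  assumes meet: "large_subtriples_meet (blowup_edges (hat_edges E) n) \<mu> P Q R"
    and P1: "large_subset \<mu> (layer_part P 1) P" and Q2: "large_subset \<mu> (layer_part Q 2) Q"
    and R0: "large_subset \<mu> (layer_part R 0) R"
    and fin: "finite P" "finite Q" "finite R"
    and sub: "P \<subseteq> blowup_vertices (hat_vertices U V) n" "Q \<subseteq> blowup_vertices (hat_vertices U V) n"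
    and "finite V" "\<mu> \<le> 1" and V_\<mu>: "(real (card V) + 2) * \<mu> \<le> 1"
  shows "\<exists>v. large_subset \<mu> {w \<in> P. fst w = VB v} P \<and> large_subset \<mu> {w \<in> Q. fst w = VC v} Q"
proof -
  have V_small: "real (card V) * (\<mu> * real (card S)) \<le> (1 - 2 * \<mu>) * real (card S)" for S :: "'b set"
    using mult_right_mono[OF V_\<mu>, of "real (card S)"] by (simp add: algebra_simps)
  have P_bound: "real (card V) * (\<mu> * real (card P)) < real (card (layer_part P 1))"
    using dominant_layer_parts(1)[OF meet P1 Q2 R0 fin] V_small[of P] by linarith
  obtain v where v: "\<mu> * real (card P) \<le> real (card {w \<in> P. fst w = VB v})"
    using exists_large_piece_of_cover[OF \<open>finite V\<close> layer_parts_covered_by_fibres(1)[OF sub(1)] _ P_bound]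
      fin(1) by auto
  have Q_bound: "real (card V) * (\<mu> * real (card Q)) < real (card (layer_part Q 2))"
    using dominant_layer_parts(2)[OF meet P1 Q2 R0 fin] V_small[of Q] by linarith
  obtain v' where v': "\<mu> * real (card Q) \<le> real (card {w \<in> Q. fst w = VC v'})"
    using exists_large_piece_of_cover[OF \<open>finite V\<close> layer_parts_covered_by_fibres(2)[OF sub(2)] _ Q_bound]
      fin(2) by auto
  have large: "large_subset \<mu> {w \<in> P. fst w = VB v} P" "large_subset \<mu> {w \<in> Q. fst w = VC v'} Q"
    using v v' unfolding large_subset_def by auto
  then obtain p q r where "fst p = VB v" "fst q = VC v'" "{p, q, r} \<in> blowup_edges (hat_edges E) n"
    using meet large_subset_refl[OF \<open>\<mu> \<le> 1\<close>, of R] unfolding large_subtriples_meet_def by blast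
  then have "v' = v" using hat_edge_VB_VC by (metis blowup_edge_iff)
  then show ?thesis using large by blast
qed

lemma has_complete_large_subtriple_BCA:
  assumes meet: "large_subtriples_meet (blowup_edges (hat_edges E) n) \<mu> P Q R"
    and P1: "large_subset \<mu> (layer_part P 1) P" and Q2: "large_subset \<mu> (layer_part Q 2) Q"
    and R0: "large_subset \<mu> (layer_part R 0) R"
    and fin: "finite P" "finite Q" "finite R"
    and sub: "P \<subseteq> blowup_vertices (hat_vertices U V) n" "Q \<subseteq> blowup_vertices (hat_vertices U V) n"
      "R \<subseteq> blowup_vertices (hat_vertices U V) n"
    and "finite V" "4 * \<mu> \<le> 1" and V_\<mu>: "(real (card V) + 2) * \<mu> \<le> 1"
  shows "has_complete_large_subtriple (blowup_edges (hat_edges E) n) \<mu> P Q R"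
proof -
  have "\<mu> \<le> 1" using \<open>4 * \<mu> \<le> 1\<close> by simp
  obtain v where B: "large_subset \<mu> {w \<in> P. fst w = VB v} P"
    and C: "large_subset \<mu> {w \<in> Q. fst w = VC v} Q"
    using common_large_fibre[OF meet P1 Q2 R0 fin sub(1,2) \<open>finite V\<close> \<open>\<mu> \<le> 1\<close> V_\<mu>] by blast
  define N where "N = {w \<in> R. \<exists>u. fst w = VA u \<and> (u, v) \<in> E}"
  have "large_subset \<mu> N R"
  proof (rule ccontr)
    assume not_large: "\<not> large_subset \<mu> N R"
    define M where "M = {w \<in> R. \<exists>u. fst w = VA u \<and> (u, v) \<notin> E}"
    have "layer_part R 0 \<subseteq> N \<union> M"
      unfolding layer_part_def N_def M_def by (auto elim: layer.elims)
    then have "card (layer_part R 0) \<le> card (N \<union> M)"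
      using fin(3) unfolding N_def M_def by (intro card_mono) auto
    also have "\<dots> \<le> card N + card M" by (rule card_Un_le)
    finally have "real (card (layer_part R 0)) \<le> real (card N) + real (card M)"
      by (metis of_nat_add of_nat_le_iff)
    moreover have "real (card N) < \<mu> * real (card R)"
      using not_large unfolding large_subset_def N_def by auto
    moreover have "\<mu> * real (card R) \<le> (1 - 3 * \<mu>) * real (card R)"
      using mult_right_mono[OF \<open>4 * \<mu> \<le> 1\<close>, of "real (card R)"] by (simp add: algebra_simps)
    ultimately have "\<mu> * real (card R) \<le> real (card M)"
      using dominant_layer_parts(3)[OF meet P1 Q2 R0 fin] by (simp add: algebra_simps)
    then have "large_subset \<mu> M R" unfolding large_subset_def M_def by auto
    then obtain p q r where "fst p = VB v" "fst q = VC v" "r \<in> M"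
      and "{p, q, r} \<in> blowup_edges (hat_edges E) n"
      using meet B C unfolding large_subtriples_meet_def by blast
    then show False
      unfolding M_def by (auto simp: blowup_edge_iff hat_edge_VB_VC_VA_iff)
  qed
  moreover have "{p, q, r} \<in> blowup_edges (hat_edges E) n"
    if "p \<in> {w \<in> P. fst w = VB v}" "q \<in> {w \<in> Q. fst w = VC v}" "r \<in> N" for p q r
    using that sub unfolding N_def by (auto simp: blowup_edge_iff blowup_vertex_iff hat_edge_VB_VC_VA_iff)
  ultimately show ?thesis
    using B C unfolding has_complete_large_subtriple_def by blast
qed

lemma has_complete_large_subtriple_if_meet:
  assumes meet: "large_subtriples_meet (blowup_edges (hat_edges E) n) \<mu> X Y Z"
    and fin: "finite X" "finite Y" "finite Z"
    and sub: "X \<subseteq> blowup_vertices (hat_vertices U V) n" "Y \<subseteq> blowup_vertices (hat_vertices U V) n"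
      "Z \<subseteq> blowup_vertices (hat_vertices U V) n"
    and bounds: "finite V" "4 * \<mu> \<le> 1" "(real (card V) + 2) * \<mu> \<le> 1"
  shows "has_complete_large_subtriple (blowup_edges (hat_edges E) n) \<mu> X Y Z"
proof -
  have "3 * \<mu> \<le> 1" using bounds(2) by simp
  then obtain i j k where ijk: "i < 3" "j < 3" "k < 3"
    and large: "large_subset \<mu> (layer_part X i) X" "large_subset \<mu> (layer_part Y j) Y"
      "large_subset \<mu> (layer_part Z k) Z"
    using exists_large_layer_part fin by meson
  have BCA: "has_complete_large_subtriple (blowup_edges (hat_edges E) n) \<mu> P Q R"
    if "large_subtriples_meet (blowup_edges (hat_edges E) n) \<mu> P Q R"
      "large_subset \<mu> (layer_part P 1) P" "large_subset \<mu> (layer_part Q 2) Q"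
      "large_subset \<mu> (layer_part R 0) R" "P \<in> {X, Y, Z}" "Q \<in> {X, Y, Z}" "R \<in> {X, Y, Z}" for P Q R
  proof -
    have "finite S \<and> S \<subseteq> blowup_vertices (hat_vertices U V) n" if "S \<in> {X, Y, Z}" for S
      using that fin sub by auto
    then show ?thesis
      using has_complete_large_subtriple_BCA[OF that(1-4) _ _ _ _ _ _ bounds] that(5-7) by meson
  qed
  note swap12 = has_complete_large_subtriple_swap12 large_subtriples_meet_swap12
  note swap23 = has_complete_large_subtriple_swap23 large_subtriples_meet_swap23
  have "i \<noteq> j \<and> i \<noteq> k \<and> j \<noteq> k"
    using large_layer_parts_distinct[OF meet large] .
  with ijk have "i = 1 \<and> j = 2 \<and> k = 0 \<or> i = 1 \<and> j = 0 \<and> k = 2 \<or> i = 2 \<and> j = 1 \<and> k = 0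
    \<or> i = 0 \<and> j = 1 \<and> k = 2 \<or> i = 2 \<and> j = 0 \<and> k = 1 \<or> i = 0 \<and> j = 2 \<and> k = 1"
    by presburger
  then consider "i = 1" "j = 2" "k = 0" | "i = 1" "j = 0" "k = 2" | "i = 2" "j = 1" "k = 0"
    | "i = 0" "j = 1" "k = 2" | "i = 2" "j = 0" "k = 1" | "i = 0" "j = 2" "k = 1"
    by blast
  then show ?thesis
  proof cases
    case 1
    then show ?thesis using BCA[OF meet] large by simp
  next
    case 2
    then have "has_complete_large_subtriple (blowup_edges (hat_edges E) n) \<mu> X Z Y"
      using BCA[OF swap23(2)[OF meet]] large by simp
    then show ?thesis by (rule swap23(1))
  next
    case 3
    then have "has_complete_large_subtriple (blowup_edges (hat_edges E) n) \<mu> Y X Z"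
      using BCA[OF swap12(2)[OF meet]] large by simp
    then show ?thesis by (rule swap12(1))
  next
    case 4
    then have "has_complete_large_subtriple (blowup_edges (hat_edges E) n) \<mu> Y Z X"
      using BCA[OF swap23(2)[OF swap12(2)[OF meet]]] large by simp
    then show ?thesis by (rule swap12(1)[OF swap23(1)])
  next
    case 5
    then have "has_complete_large_subtriple (blowup_edges (hat_edges E) n) \<mu> Z X Y"
      using BCA[OF swap12(2)[OF swap23(2)[OF meet]]] large by simp
    then show ?thesis by (rule swap23(1)[OF swap12(1)])
  next
    case 6
    then have "has_complete_large_subtriple (blowup_edges (hat_edges E) n) \<mu> Z Y X"
      using BCA[OF swap12(2)[OF swap23(2)[OF swap12(2)[OF meet]]]] large by simp
    then show ?thesis by (rule swap12(1)[OF swap23(1)[OF swap12(1)]])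
  qed
qed

lemma homogeneous_triple_if_regular_triple:
  assumes reg: "regular_triple (blowup_edges (hat_edges E) n) \<mu> X Y Z"
    and fin: "finite X" "finite Y" "finite Z" and ne: "X \<noteq> {}" "Y \<noteq> {}" "Z \<noteq> {}"
    and sub: "X \<subseteq> blowup_vertices (hat_vertices U V) n" "Y \<subseteq> blowup_vertices (hat_vertices U V) n"
      "Z \<subseteq> blowup_vertices (hat_vertices U V) n"
    and "finite V" "0 < \<mu>" "2 * real (card V) * \<mu> \<le> 1"
  shows "homogeneous_triple (blowup_edges (hat_edges E) n) (4 * \<mu>) X Y Z"
proof (cases "density3 (blowup_edges (hat_edges E) n) X Y Z < 4 * \<mu>")
  case True
  then show ?thesis unfolding homogeneous_triple_def by (simp add: density3_nonneg)
next
  case False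
  let ?d = "density3 (blowup_edges (hat_edges E) n) X Y Z"
  have "?d \<le> 1" using density3_le_1 fin by blast
  then have "4 * \<mu> \<le> 1" "(real (card V) + 2) * \<mu> \<le> 1"
    using False \<open>2 * real (card V) * \<mu> \<le> 1\<close> by (simp_all add: algebra_simps)
  moreover have "large_subtriples_meet (blowup_edges (hat_edges E) n) \<mu> X Y Z"
    using regular_triple_large_subtriples_meet[OF reg] False \<open>0 < \<mu>\<close> by simp
  ultimately have "has_complete_large_subtriple (blowup_edges (hat_edges E) n) \<mu> X Y Z"
    using has_complete_large_subtriple_if_meet fin sub \<open>finite V\<close> by blast
  then have "1 - \<mu> \<le> ?d"
    using regular_triple_density_ge[OF reg] fin ne \<open>0 < \<mu>\<close> by blast
  then show ?thesis unfolding homogeneous_triple_def using \<open>?d \<le> 1\<close> \<open>0 < \<mu>\<close> by simp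
qed

lemma homogeneous_partition_if_regular_partition:
  assumes reg: "regular_partition (blowup_edges (hat_edges E) n) (blowup_vertices (hat_vertices U V) n) P \<mu>"
    and "partition_on (blowup_vertices (hat_vertices U V) n) P"
    and "finite U" "finite V" "0 < \<mu>" "2 * real (card V) * \<mu> \<le> 1"
  shows "homogeneous_partition (blowup_edges (hat_edges E) n) (blowup_vertices (hat_vertices U V) n) P (4 * \<mu>)"
proof -
  let ?W = "blowup_vertices (hat_vertices U V) n"
  have "finite ?W"
    using \<open>finite U\<close> \<open>finite V\<close> unfolding blowup_vertices_def hat_vertices_def by simp
  then have parts: "X \<subseteq> ?W" "X \<noteq> {}" "finite X" if "X \<in> P" for X
    using \<open>partition_on ?W P\<close> that unfolding partition_on_def by (auto intro: finite_subset)
  show ?thesis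
  proof (rule homogeneous_partition_if_regular_triples_homogeneous[OF reg \<open>finite ?W\<close>])
    show "\<forall>X\<in>P. X \<subseteq> ?W" "\<mu> \<le> 4 * \<mu>" using parts \<open>0 < \<mu>\<close> by auto
    fix X Y Z assume "X \<in> P" "Y \<in> P" "Z \<in> P" "regular_triple (blowup_edges (hat_edges E) n) \<mu> X Y Z"
    then show "homogeneous_triple (blowup_edges (hat_edges E) n) (4 * \<mu>) X Y Z"
      using homogeneous_triple_if_regular_triple[where U = U and V = V] parts assms(4-6) by blast
  qed
qed

theorem lemma6p6:
  fixes t K1 K2 :: nat and \<mu> :: real
  assumes "t \<ge> 1" and "1 \<le> K1" and "K1 \<le> K2"
    and "0 < \<mu>" and "\<mu> < 1 / (2 * real K1)"
  shows "\<exists>n0::nat. \<forall>n\<ge>n0. \<forall>(U::nat set) (V::nat set) (E::(nat \<times> nat) set) P.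
           finite U \<and> finite V \<and> card V = K1 \<and> card U = K2 \<and> E \<subseteq> U \<times> V \<and>
           partition_on (blowup_vertices (hat_vertices U V) n) P \<and> card P \<le> t \<and>
           regular_partition (blowup_edges (hat_edges E) n)
             (blowup_vertices (hat_vertices U V) n) P \<mu>
           \<longrightarrow> homogeneous_partition (blowup_edges (hat_edges E) n)
                 (blowup_vertices (hat_vertices U V) n) P (4 * \<mu>)"
proof (intro exI[of _ 0] allI impI)
  (* Any n0 works: neither n nor the bounds t on card P and K2 on card U play a role. *)
  fix n :: nat and U V :: "nat set" and E :: "(nat \<times> nat) set" and P
  assume "finite U \<and> finite V \<and> card V = K1 \<and> card U = K2 \<and> E \<subseteq> U \<times> V \<and>
    partition_on (blowup_vertices (hat_vertices U V) n) P \<and> card P \<le> t \<and>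
    regular_partition (blowup_edges (hat_edges E) n) (blowup_vertices (hat_vertices U V) n) P \<mu>"
  moreover have "2 * real K1 * \<mu> \<le> 1"
    using assms(2,5) by (simp add: field_simps)
  ultimately show "homogeneous_partition (blowup_edges (hat_edges E) n)
      (blowup_vertices (hat_vertices U V) n) P (4 * \<mu>)"
    using homogeneous_partition_if_regular_partition \<open>0 < \<mu>\<close> by blast
qed

end
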